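(* Fix integers $r, s, t \ge 1$. Let $(\Lambda V, d)$ be a minimal Sullivan algebra over $\mathbb{Q}$ with $V = \{V^p\}_{p \ge r}$ (i.e. $V^p = 0$ for $p < r$), and such that $d$ vanishes on all elements of degree $\le s$. Suppose that all $t$-complementary products in $H^+(\Lambda V)$ vanish, i.e. $\alpha \wedge \beta = 0$ in $H^t(\Lambda V)$ for all $\alpha \in H^i(\Lambda V)$, $\beta \in H^{t-i}(\Lambda V)$, $1 \le i \le t-1$. If $t \le r + s$, then the homomorphism $\zeta \colon H^+(\Lambda V) \to V$ is injective in degree $t$.
   Context: A graded vector space is $V = \{V^p\}_{p\ge1}$ of rational vector spaces. $\Lambda V$ is the free graded commutative algebra on $V$; $\Lambda^q V$ is the span of products of word length $q$ of elements of $V$, $\Lambda^{\ge q}V=\bigoplus_{q'\ge q}\Lambda^{q'}V$, $\Lambda^+V = \Lambda^{\ge1}V$. A Sullivan algebra is a commutative cochain algebra $(\Lambda V,d)$ such that there is an increasing filtration $V(0)\subset V(1)\subset\cdots$ with $V=\bigcup V(k)$, $d=0$ on $V(0)$ and $d(V(k))\subset\Lambda V(k-1)$; it is minimal if moreover $\mathrm{im}\, d \subset \Lambda^{\ge2}V$. For a minimal Sullivan algebra, $\zeta \colon H^+(\Lambda V)\to V$ is defined by $\zeta([z]) = \rho(z)$, where $\rho\colon\Lambda^+V\to\Lambda^1V=V$ is the projection onto word length one (well defined since $\mathrm{im}\,d\subset\Lambda^{\ge2}V$). *)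

theory Defs
  imports Complex_Main "HOL-Library.Multiset"
begin

text \<open>
  Concrete model of the free graded commutative algebra \<Lambda>V over the rationals.
  The graded vector space V is given by a homogeneous basis indexed by the type 'i,
  with degree function deg; the basis is totally ordered (class linorder).
  A basis monomial of \<Lambda>V is a finite multiset of basis elements in which every
  odd-degree element occurs at most once; it stands for the product of its
  elements written in increasing order. An element of \<Lambda>V is a finitely
  supported rational function on such monomials.
\<close>

type_synonym 'i lam = "'i multiset \<Rightarrow> rat"

definition valid_mon :: "('i \<Rightarrow> nat) \<Rightarrow> 'i multiset \<Rightarrow> bool" where
  "valid_mon deg m \<longleftrightarrow> (\<forall>x. odd (deg x) \<longrightarrow> count m x \<le> 1)"

definition mdeg :: "('i \<Rightarrow> nat) \<Rightarrow> 'i multiset \<Rightarrow> nat" where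
  "mdeg deg m = sum_mset (image_mset deg m)"

definition LV :: "('i \<Rightarrow> nat) \<Rightarrow> 'i lam set" where
  "LV deg = {f. finite {m. f m \<noteq> 0} \<and> (\<forall>m. f m \<noteq> 0 \<longrightarrow> valid_mon deg m)}"

definition lzero :: "'i lam" where
  "lzero = (\<lambda>m. 0)"

definition lone :: "'i lam" where
  "lone = (\<lambda>m. if m = {#} then 1 else 0)"

definition ladd :: "'i lam \<Rightarrow> 'i lam \<Rightarrow> 'i lam" where
  "ladd f g = (\<lambda>m. f m + g m)"

definition lsmult :: "rat \<Rightarrow> 'i lam \<Rightarrow> 'i lam" where
  "lsmult c f = (\<lambda>m. c * f m)"

text \<open>Koszul sign for the product of the ordered monomials a and b.\<close>
definition msign :: "('i::linorder \<Rightarrow> nat) \<Rightarrow> 'i multiset \<Rightarrow> 'i multiset \<Rightarrow> rat" where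
  "msign deg a b = (-1) ^ card {(x, y). x \<in># a \<and> y \<in># b \<and> odd (deg x) \<and> odd (deg y) \<and> y < x}"

definition lmult :: "('i::linorder \<Rightarrow> nat) \<Rightarrow> 'i lam \<Rightarrow> 'i lam \<Rightarrow> 'i lam" where
  "lmult deg f g = (\<lambda>m. if valid_mon deg m
      then (\<Sum>a\<in>{a. a \<subseteq># m}. msign deg a (m - a) * f a * g (m - a)) else 0)"

definition homog :: "('i \<Rightarrow> nat) \<Rightarrow> nat \<Rightarrow> 'i lam \<Rightarrow> bool" where
  "homog deg n f \<longleftrightarrow> (\<forall>m. f m \<noteq> 0 \<longrightarrow> mdeg deg m = n)"

definition hcomp :: "('i \<Rightarrow> nat) \<Rightarrow> nat \<Rightarrow> 'i lam \<Rightarrow> 'i lam" where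
  "hcomp deg n f = (\<lambda>m. if mdeg deg m = n then f m else 0)"

definition Vsp :: "('i \<Rightarrow> nat) \<Rightarrow> 'i lam set" where
  "Vsp deg = {f \<in> LV deg. \<forall>m. f m \<noteq> 0 \<longrightarrow> size m = 1}"

definition rho :: "'i lam \<Rightarrow> 'i lam" where
  "rho z = (\<lambda>m. if size m = 1 then z m else 0)"

inductive_set gen_alg :: "('i::linorder \<Rightarrow> nat) \<Rightarrow> 'i lam set \<Rightarrow> 'i lam set"
  for deg :: "'i \<Rightarrow> nat" and W :: "'i lam set" where
  one: "lone \<in> gen_alg deg W"
| gen: "f \<in> W \<Longrightarrow> f \<in> gen_alg deg W"
| add: "f \<in> gen_alg deg W \<Longrightarrow> g \<in> gen_alg deg W \<Longrightarrow> ladd f g \<in> gen_alg deg W"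
| smult: "f \<in> gen_alg deg W \<Longrightarrow> lsmult c f \<in> gen_alg deg W"
| mult: "f \<in> gen_alg deg W \<Longrightarrow> g \<in> gen_alg deg W \<Longrightarrow> lmult deg f g \<in> gen_alg deg W"

definition graded_subspace :: "('i \<Rightarrow> nat) \<Rightarrow> 'i lam set \<Rightarrow> bool" where
  "graded_subspace deg W \<longleftrightarrow> W \<subseteq> Vsp deg \<and> lzero \<in> W
     \<and> (\<forall>f\<in>W. \<forall>g\<in>W. ladd f g \<in> W) \<and> (\<forall>c. \<forall>f\<in>W. lsmult c f \<in> W)
     \<and> (\<forall>n. \<forall>f\<in>W. hcomp deg n f \<in> W)"

definition cochain_alg :: "('i::linorder \<Rightarrow> nat) \<Rightarrow> ('i lam \<Rightarrow> 'i lam) \<Rightarrow> bool" where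
  "cochain_alg deg d \<longleftrightarrow>
     (\<forall>x. 1 \<le> deg x)
   \<and> (\<forall>f\<in>LV deg. d f \<in> LV deg)
   \<and> (\<forall>f\<in>LV deg. \<forall>g\<in>LV deg. d (ladd f g) = ladd (d f) (d g))
   \<and> (\<forall>c. \<forall>f\<in>LV deg. d (lsmult c f) = lsmult c (d f))
   \<and> (\<forall>n. \<forall>f\<in>LV deg. homog deg n f \<longrightarrow> homog deg (n + 1) (d f))
   \<and> (\<forall>n. \<forall>f\<in>LV deg. \<forall>g\<in>LV deg. homog deg n f \<longrightarrow>
        d (lmult deg f g) = ladd (lmult deg (d f) g) (lsmult ((-1) ^ n) (lmult deg f (d g))))
   \<and> (\<forall>f\<in>LV deg. d (d f) = lzero)"

definition sullivan_alg :: "('i::linorder \<Rightarrow> nat) \<Rightarrow> ('i lam \<Rightarrow> 'i lam) \<Rightarrow> bool" where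
  "sullivan_alg deg d \<longleftrightarrow> cochain_alg deg d \<and>
     (\<exists>Vf :: nat \<Rightarrow> 'i lam set.
        (\<forall>k. graded_subspace deg (Vf k)) \<and> (\<forall>k. Vf k \<subseteq> Vf (Suc k))
      \<and> Vsp deg = (\<Union>k. Vf k)
      \<and> (\<forall>f\<in>Vf 0. d f = lzero)
      \<and> (\<forall>k. \<forall>f\<in>Vf (Suc k). d f \<in> gen_alg deg (Vf k)))"

definition minimal_sullivan_alg :: "('i::linorder \<Rightarrow> nat) \<Rightarrow> ('i lam \<Rightarrow> 'i lam) \<Rightarrow> bool" where
  "minimal_sullivan_alg deg d \<longleftrightarrow> sullivan_alg deg d \<and>
     (\<forall>f\<in>LV deg. \<forall>m. size m \<le> 1 \<longrightarrow> d f m = 0)"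

definition cocycle :: "('i \<Rightarrow> nat) \<Rightarrow> ('i lam \<Rightarrow> 'i lam) \<Rightarrow> nat \<Rightarrow> 'i lam \<Rightarrow> bool" where
  "cocycle deg d n z \<longleftrightarrow> z \<in> LV deg \<and> homog deg n z \<and> d z = lzero"

definition coboundary :: "('i \<Rightarrow> nat) \<Rightarrow> ('i lam \<Rightarrow> 'i lam) \<Rightarrow> 'i lam \<Rightarrow> bool" where
  "coboundary deg d z \<longleftrightarrow> (\<exists>b\<in>LV deg. z = d b)"

end

theory Submission
  imports Defs
begin

text \<open>
  A cocycle z of degree t with \<rho>(z) = 0 is a combination of monomials of word length at
  least two, so each of its monomials is a product x \<cdot> R of a generator x and a monomial R
  of positive word length. Both factors have degree at least r, hence degree at most
  t - r \<le> s; as d vanishes in degrees \<le> s, both are cocycles. Their product is therefore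
  a coboundary by the vanishing of t-complementary products, and it equals the monomial
  x R up to a Koszul sign. Coboundaries form a subspace, so z is a coboundary.
\<close>

definition lmonom :: "'i multiset \<Rightarrow> 'i lam" where
  "lmonom m = (\<lambda>m'. if m' = m then 1 else 0)"

lemma LV_lmonom: "valid_mon deg m \<Longrightarrow> lmonom m \<in> LV deg"
  unfolding LV_def lmonom_def by auto

lemma homog_lmonom: "homog deg (mdeg deg m) (lmonom m)"
  by (simp add: homog_def lmonom_def)

lemma valid_mon_subset: "valid_mon deg m \<Longrightarrow> a \<subseteq># m \<Longrightarrow> valid_mon deg a"
  unfolding valid_mon_def by (meson le_trans mset_subset_eq_count)

lemma finite_submultisets: "finite {a. a \<subseteq># m}"
proof (rule finite_subset)
  show "{a. a \<subseteq># m} \<subseteq> mset ` {xs. set xs \<subseteq> set_mset m \<and> length xs \<le> size m}"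
  proof
    fix a assume "a \<in> {a. a \<subseteq># m}"
    then have "a \<subseteq># m" by simp
    moreover obtain xs where "mset xs = a" using ex_mset by blast
    ultimately have "set xs \<subseteq> set_mset m" "length xs \<le> size m"
      by (metis set_mset_mset set_mset_mono, metis size_mset size_mset_mono)
    then show "a \<in> mset ` {xs. set xs \<subseteq> set_mset m \<and> length xs \<le> size m}"
      using \<open>mset xs = a\<close> by blast
  qed
  show "finite (mset ` {xs. set xs \<subseteq> set_mset m \<and> length xs \<le> size m})"
    by (simp add: finite_lists_length_le)
qed

lemma lmult_lmonom_singleton:
  assumes "valid_mon deg (add_mset x R)"
  shows "lmult deg (lmonom {#x#}) (lmonom R) = lsmult (msign deg {#x#} R) (lmonom (add_mset x R))"
proof (rule ext)
  fix m
  show "lmult deg (lmonom {#x#}) (lmonom R) m = lsmult (msign deg {#x#} R) (lmonom (add_mset x R)) m"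
  proof (cases "valid_mon deg m")
    case False
    then show ?thesis using assms by (auto simp: lmult_def lsmult_def lmonom_def)
  next
    case True
    have "(\<Sum>a\<in>{a. a \<subseteq># m}. msign deg a (m - a) * lmonom {#x#} a * lmonom R (m - a))
        = (\<Sum>a\<in>{a. a \<subseteq># m}. if a = {#x#} then msign deg {#x#} (m - {#x#}) * lmonom R (m - {#x#}) else 0)"
      by (rule sum.cong) (auto simp: lmonom_def)
    also have "\<dots> = (if {#x#} \<subseteq># m then msign deg {#x#} (m - {#x#}) * lmonom R (m - {#x#}) else 0)"
      by (simp add: sum.delta' finite_submultisets)
    also have "\<dots> = lsmult (msign deg {#x#} R) (lmonom (add_mset x R)) m"
      by (auto simp: lsmult_def lmonom_def)
    finally show ?thesis using True by (simp add: lmult_def)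
  qed
qed

lemma LV_ladd: "f \<in> LV deg \<Longrightarrow> g \<in> LV deg \<Longrightarrow> ladd f g \<in> LV deg"
proof -
  have "{m. ladd f g m \<noteq> 0} \<subseteq> {m. f m \<noteq> 0} \<union> {m. g m \<noteq> 0}" by (auto simp: ladd_def)
  then show "f \<in> LV deg \<Longrightarrow> g \<in> LV deg \<Longrightarrow> ladd f g \<in> LV deg"
    unfolding LV_def by (blast intro: finite_subset)
qed

lemma LV_lsmult: "f \<in> LV deg \<Longrightarrow> lsmult c f \<in> LV deg"
  unfolding LV_def lsmult_def by auto

lemma coboundary_lzero:
  assumes "cochain_alg deg d"
  shows "coboundary deg d lzero"
proof -
  have lzero: "lzero \<in> LV deg" "lsmult 0 lzero = lzero" "lsmult 0 (d lzero) = lzero"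
    by (simp_all add: LV_def lsmult_def lzero_def)
  then have "d lzero = lzero" using assms unfolding cochain_alg_def by metis
  then show ?thesis using lzero(1) unfolding coboundary_def by metis
qed

lemma coboundary_ladd:
  assumes "cochain_alg deg d" "coboundary deg d f" "coboundary deg d g"
  shows "coboundary deg d (ladd f g)"
proof -
  obtain b c where "b \<in> LV deg" "c \<in> LV deg" "f = d b" "g = d c"
    using assms unfolding coboundary_def by blast
  then show ?thesis using assms(1) LV_ladd unfolding coboundary_def cochain_alg_def by metis
qed

lemma coboundary_lsmult:
  assumes "cochain_alg deg d" "coboundary deg d f"
  shows "coboundary deg d (lsmult c f)"
proof -
  obtain b where "b \<in> LV deg" "f = d b"
    using assms unfolding coboundary_def by blast
  then show ?thesis using assms(1) LV_lsmult unfolding coboundary_def cochain_alg_def by metis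
qed

lemma coboundary_if_monomials_coboundary:
  assumes "cochain_alg deg d" "f \<in> LV deg" "\<And>m. f m \<noteq> 0 \<Longrightarrow> coboundary deg d (lmonom m)"
  shows "coboundary deg d f"
proof -
  have "finite {m. f m \<noteq> 0}" using assms(2) by (simp add: LV_def)
  then show ?thesis using assms(2,3)
  proof (induction "{m. f m \<noteq> 0}" arbitrary: f rule: finite_induct)
    case empty
    then have "f = lzero" by (auto simp: lzero_def)
    then show ?case using coboundary_lzero[OF assms(1)] by simp
  next
    case (insert m S f)
    define g where "g = f(m := 0)"
    have "S = {m. g m \<noteq> 0}" using insert.hyps(2,4) unfolding g_def by auto
    moreover have "g \<in> LV deg" using insert.prems(1) unfolding LV_def g_def
      by (auto intro: finite_subset[of _ "{m. f m \<noteq> 0}"])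
    moreover have "\<And>m'. g m' \<noteq> 0 \<Longrightarrow> coboundary deg d (lmonom m')"
      using insert.prems(2) by (simp add: g_def split: if_splits)
    ultimately have "coboundary deg d g" by (rule insert.hyps(3))
    moreover have "coboundary deg d (lmonom m)" using insert.hyps(4) insert.prems(2) by blast
    moreover have "f = ladd (lsmult (f m) (lmonom m)) g"
      by (auto simp: fun_eq_iff ladd_def lsmult_def lmonom_def g_def)
    ultimately show ?case using coboundary_ladd coboundary_lsmult assms(1) by metis
  qed
qed

lemma cocycle_lmonom_low_degree:
  assumes "\<forall>n\<le>s. \<forall>f\<in>LV deg. homog deg n f \<longrightarrow> d f = lzero"
    and "valid_mon deg m" "mdeg deg m \<le> s"
  shows "cocycle deg d (mdeg deg m) (lmonom m)"
  using assms LV_lmonom homog_lmonom unfolding cocycle_def by blast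

lemma coboundary_lmonom_split:
  assumes "cochain_alg deg d"
    and low_cocycles: "\<forall>n\<le>s. \<forall>f\<in>LV deg. homog deg n f \<longrightarrow> d f = lzero"
    and products: "\<forall>i. 1 \<le> i \<and> i \<le> t - 1 \<longrightarrow>
           (\<forall>z w. cocycle deg d i z \<and> cocycle deg d (t - i) w \<longrightarrow> coboundary deg d (lmult deg z w))"
    and "valid_mon deg (add_mset x R)" "mdeg deg (add_mset x R) = t" "R \<noteq> {#}"
    and "deg x \<le> s" "mdeg deg R \<le> s"
  shows "coboundary deg d (lmonom (add_mset x R))"
proof -
  have "1 \<le> deg x" using assms(1) by (simp add: cochain_alg_def)
  moreover have "1 \<le> mdeg deg R"
    using assms(1,6) by (cases R) (auto simp: cochain_alg_def mdeg_def intro: trans_le_add1)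
  moreover have "t = deg x + mdeg deg R" using assms(5) by (simp add: mdeg_def)
  moreover have "valid_mon deg {#x#}" "valid_mon deg R"
    using assms(4) valid_mon_subset by fastforce+
  ultimately have "coboundary deg d (lmult deg (lmonom {#x#}) (lmonom R))"
    using products cocycle_lmonom_low_degree[OF low_cocycles] assms(7,8)
    by (force simp: mdeg_def)
  then have "coboundary deg d (lsmult (msign deg {#x#} R)
      (lmult deg (lmonom {#x#}) (lmonom R)))"
    using coboundary_lsmult[OF assms(1)] by blast
  moreover have "msign deg {#x#} R * msign deg {#x#} R = 1"
    by (simp add: msign_def flip: power_add)
  ultimately show ?thesis
    by (simp add: lmult_lmonom_singleton[OF assms(4)] lsmult_def mult.assoc[symmetric])
qed

theorem mainTheorem7:
  fixes deg :: "'i::linorder \<Rightarrow> nat" and d :: "'i lam \<Rightarrow> 'i lam" and r s t :: nat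
  assumes "1 \<le> r" and "1 \<le> s" and "1 \<le> t"
    and "minimal_sullivan_alg deg d"
    and "\<forall>x. r \<le> deg x"
    and "\<forall>n\<le>s. \<forall>f\<in>LV deg. homog deg n f \<longrightarrow> d f = lzero"
    and "\<forall>i. 1 \<le> i \<and> i \<le> t - 1 \<longrightarrow>
           (\<forall>z w. cocycle deg d i z \<and> cocycle deg d (t - i) w \<longrightarrow> coboundary deg d (lmult deg z w))"
    and "t \<le> r + s"
  shows "\<forall>z. cocycle deg d t z \<and> rho z = lzero \<longrightarrow> coboundary deg d z"
proof (intro allI impI)
  fix z assume z: "cocycle deg d t z \<and> rho z = lzero"
  have cochain: "cochain_alg deg d"
    using assms(4) unfolding minimal_sullivan_alg_def sullivan_alg_def by blast
  have "coboundary deg d (lmonom m)" if "z m \<noteq> 0" for m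
  proof -
    have "rho z m = 0" using z by (simp add: lzero_def)
    then have m: "valid_mon deg m" "mdeg deg m = t" "size m \<noteq> 1"
      using z that unfolding cocycle_def homog_def LV_def rho_def by auto
    then have "m \<noteq> {#}" using assms(3) by (auto simp: mdeg_def)
    with m(3) obtain x y R where xR: "m = add_mset x (add_mset y R)"
      by (metis multiset_cases size_single)
    have "r \<le> deg x" "r \<le> mdeg deg (add_mset y R)"
      using assms(5) by (simp_all add: mdeg_def trans_le_add1)
    moreover have "t = deg x + mdeg deg (add_mset y R)" using m(2) xR by (simp add: mdeg_def)
    ultimately have "deg x \<le> s" "mdeg deg (add_mset y R) \<le> s" using assms(8) by linarith+
    with m(1,2) show ?thesis
      unfolding xR by (intro coboundary_lmonom_split[OF cochain assms(6,7)]) simp_all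
  qed
  then show "coboundary deg d z" using coboundary_if_monomials_coboundary[OF cochain] z
    unfolding cocycle_def by blast
qed

end
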